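(* Let $U\subset\mathbb P^{r,s,t}$ be a connected open set containing a null point and let $F:U\to\mathbb P^{r',s',t'}$ be a local orthogonal map. Then for every null space $N\subset\mathbb P^{r,s,t}$, the image $F(N\cap U)$ is contained in a null space of $\mathbb P^{r',s',t'}$ (equivalently, the projective linear span of $F(N\cap U)$ is a null space). In particular, $F$ maps null points to null points.
   Context: Let $r,s,t\ge 0$ be integers with $n=r+s+t>0$. $\mathbb C^{r,s,t}$ denotes $\mathbb C^n$ equipped with the (possibly degenerate, indefinite) Hermitian form $\langle z,w\rangle_{r,s,t}=\sum_{j=1}^{r}z_j\bar w_j-\sum_{j=r+1}^{r+s}z_j\bar w_j$, and $\mathbb P^{r,s,t}$ is its projectivization; $\mathbb C^{r,s}=\mathbb C^{r,s,0}$, $\mathbb P^{r,s}=\mathbb P^{r,s,0}$. A point $[z]\in\mathbb P^{r,s,t}$ is positive, negative or null according as $\langle z,z\rangle_{r,s,t}>0$, $<0$ or $=0$. Two points $[z],[w]$ are orthogonal, $[z]\perp[w]$, if $\langle z,w\rangle_{r,s,t}=0$; the orthogonal complement $[z]^\perp$ is the set of points orthogonal to $[z]$. For a complex linear subspace $H\subset\mathbb C^{r,s,t}$ on which the restricted form has $a$ positive, $b$ negative and $c$ zero eigenvalues, $\mathbb PH$ is called an $(a,b,c)$-subspace; it is a null space if $a=b=0$ (i.e. the form vanishes identically on $H$). A $k$-plane is a $k$-dimensional projective linear subspace. Let $U\subset\mathbb P^{r,s,t}$ be a connected open set containing a null point. A holomorphic map $F:U\to\mathbb P^{r',s',t'}$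 is called a local orthogonal map if $F(p)\perp F(q)$ for all $p,q\in U$ with $p\perp q$. *)

theory Defs
  imports "HOL-Analysis.Analysis"
begin

text \<open>Complex n-space C^n is modelled as complex^'n, where the index type 'n is
finite and linearly ordered; the coordinates are numbered 0,...,n-1 by their rank.\<close>

definition coord_rank :: "'n::{finite,linorder} \<Rightarrow> nat" where
  "coord_rank i = card {j. j < i}"

definition cscale :: "complex \<Rightarrow> complex^'n \<Rightarrow> complex^'n" where
  "cscale c z = (\<chi> i. c * z $ i)"

definition sig_coeff :: "nat \<Rightarrow> nat \<Rightarrow> 'n::{finite,linorder} \<Rightarrow> complex" where
  "sig_coeff r s i = (if coord_rank i < r then 1 else if coord_rank i < r + s then -1 else 0)"

definition herm :: "nat \<Rightarrow> nat \<Rightarrow> complex^'n::{finite,linorder} \<Rightarrow> complex^'n::{finite,linorder} \<Rightarrow> complex" where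
  "herm r s z w = (\<Sum>i\<in>UNIV. sig_coeff r s i * z $ i * cnj (w $ i))"

definition csubspace :: "(complex^'n) set \<Rightarrow> bool" where
  "csubspace H \<longleftrightarrow> 0 \<in> H \<and> (\<forall>x\<in>H. \<forall>y\<in>H. x + y \<in> H) \<and> (\<forall>c. \<forall>x\<in>H. cscale c x \<in> H)"

text \<open>Null spaces: complex subspaces H on which the form vanishes identically
(the null space of projective space is the projectivisation of H).\<close>
definition null_subspace :: "nat \<Rightarrow> nat \<Rightarrow> (complex^'n::{finite,linorder}) set \<Rightarrow> bool" where
  "null_subspace r s H \<longleftrightarrow> csubspace H \<and> (\<forall>x\<in>H. \<forall>y\<in>H. herm r s x y = 0)"

definition proj_eq :: "complex^'n \<Rightarrow> complex^'n \<Rightarrow> bool" where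
  "proj_eq z w \<longleftrightarrow> (\<exists>c. c \<noteq> 0 \<and> w = cscale c z)"

text \<open>An open subset of projective space, represented by its (open) cone in C^n minus 0.\<close>
definition proj_cone :: "(complex^'n) set \<Rightarrow> bool" where
  "proj_cone U \<longleftrightarrow> 0 \<notin> U \<and> (\<forall>z\<in>U. \<forall>c. c \<noteq> 0 \<longrightarrow> cscale c z \<in> U)"

definition cholomorphic_on :: "(complex^'n \<Rightarrow> complex^'m) \<Rightarrow> (complex^'n) set \<Rightarrow> bool" where
  "cholomorphic_on g V \<longleftrightarrow> (\<forall>w\<in>V. \<exists>D. (g has_derivative D) (at w) \<and>
      (\<forall>v. D (cscale \<i> v) = cscale \<i> (D v)))"

text \<open>A holomorphic map from the projective open set with cone U into projective space,
given pointwise by representatives F z (nonzero, well defined up to scalars) and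
locally admitting holomorphic lifts.\<close>
definition proj_holomorphic :: "(complex^'n \<Rightarrow> complex^'m) \<Rightarrow> (complex^'n) set \<Rightarrow> bool" where
  "proj_holomorphic F U \<longleftrightarrow>
     (\<forall>z\<in>U. F z \<noteq> 0) \<and>
     (\<forall>z\<in>U. \<forall>c. c \<noteq> 0 \<longrightarrow> proj_eq (F z) (F (cscale c z))) \<and>
     (\<forall>z\<in>U. \<exists>V g. open V \<and> z \<in> V \<and> V \<subseteq> U \<and> cholomorphic_on g V \<and>
        (\<forall>w\<in>V. g w \<noteq> 0 \<and> proj_eq (F w) (g w)))"

definition local_orthogonal_map ::
  "nat \<Rightarrow> nat \<Rightarrow> nat \<Rightarrow> nat \<Rightarrow> (complex^'n::{finite,linorder} \<Rightarrow> complex^'m::{finite,linorder})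
     \<Rightarrow> (complex^'n::{finite,linorder}) set \<Rightarrow> bool" where
  "local_orthogonal_map r s r' s' F U \<longleftrightarrow> proj_holomorphic F U \<and>
     (\<forall>p\<in>U. \<forall>q\<in>U. herm r s p q = 0 \<longrightarrow> herm r' s' (F p) (F q) = 0)"

end

theory Submission
  imports Defs
begin

text \<open>A null space N is totally isotropic, so any two of its points are orthogonal; hence
the images of any two points of N \<inter> U are orthogonal, and the form of the target vanishes
on F(N \<inter> U). The form then also vanishes on the complex span of F(N \<inter> U), because the
left and right orthogonal complements of a set are complex subspaces. Null points are the
case of a point orthogonal to itself.\<close>

lemma herm_add_left: "herm r s (x + y) z = herm r s x z + herm r s y z"
  by (simp add: herm_def distrib_left distrib_right sum.distrib)

lemma herm_add_right: "herm r s z (x + y) = herm r s z x + herm r s z y"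
  by (simp add: herm_def distrib_left distrib_right sum.distrib)

lemma herm_cscale_left: "herm r s (cscale c x) z = c * herm r s x z"
  by (simp add: herm_def cscale_def sum_distrib_left algebra_simps)

lemma herm_cscale_right: "herm r s z (cscale c x) = cnj c * herm r s z x"
  by (simp add: herm_def cscale_def sum_distrib_left algebra_simps)

lemma herm_zero_left [simp]: "herm r s 0 z = 0"
  by (simp add: herm_def)

lemma herm_zero_right [simp]: "herm r s z 0 = 0"
  by (simp add: herm_def)

definition cspan :: "(complex^'n) set \<Rightarrow> (complex^'n) set" where
  "cspan S = \<Inter>{K. csubspace K \<and> S \<subseteq> K}"

lemma csubspace_cspan: "csubspace (cspan S)"
  unfolding cspan_def csubspace_def by auto

lemma cspan_superset: "S \<subseteq> cspan S"
  unfolding cspan_def by auto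

lemma cspan_minimal: "csubspace K \<Longrightarrow> S \<subseteq> K \<Longrightarrow> cspan S \<subseteq> K"
  unfolding cspan_def by auto

lemma csubspace_left_orthogonal: "csubspace {x. \<forall>y\<in>S. herm r s x y = 0}"
  unfolding csubspace_def by (auto simp: herm_add_left herm_cscale_left)

lemma csubspace_right_orthogonal: "csubspace {y. \<forall>x\<in>S. herm r s x y = 0}"
  unfolding csubspace_def by (auto simp: herm_add_right herm_cscale_right)

lemma null_subspace_cspan:
  assumes "\<forall>x\<in>S. \<forall>y\<in>S. herm r s x y = 0"
  shows "null_subspace r s (cspan S)"
proof -
  have "S \<subseteq> {x. \<forall>y\<in>S. herm r s x y = 0}"
    using assms by blast
  then have "cspan S \<subseteq> {x. \<forall>y\<in>S. herm r s x y = 0}"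
    by (rule cspan_minimal[OF csubspace_left_orthogonal])
  then have "S \<subseteq> {y. \<forall>x\<in>cspan S. herm r s x y = 0}"
    by blast
  then have "cspan S \<subseteq> {y. \<forall>x\<in>cspan S. herm r s x y = 0}"
    by (rule cspan_minimal[OF csubspace_right_orthogonal])
  then show ?thesis
    using csubspace_cspan unfolding null_subspace_def by blast
qed

lemma local_orthogonal_mapD:
  "local_orthogonal_map r s r' s' F U \<Longrightarrow> p \<in> U \<Longrightarrow> q \<in> U \<Longrightarrow> herm r s p q = 0
    \<Longrightarrow> herm r' s' (F p) (F q) = 0"
  unfolding local_orthogonal_map_def by blast

lemma local_orthogonal_map_isotropic_image:
  assumes "local_orthogonal_map r s r' s' F U" and "\<forall>x\<in>S. \<forall>y\<in>S. herm r s x y = 0"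
  shows "\<forall>x\<in>F ` (U \<inter> S). \<forall>y\<in>F ` (U \<inter> S). herm r' s' x y = 0"
proof (intro ballI)
  fix x y
  assume "x \<in> F ` (U \<inter> S)" and "y \<in> F ` (U \<inter> S)"
  then obtain p q where p: "p \<in> U" "p \<in> S" and q: "q \<in> U" "q \<in> S"
    and "x = F p" "y = F q"
    by blast
  moreover have "herm r s p q = 0"
    using assms(2) p(2) q(2) by blast
  ultimately show "herm r' s' x y = 0"
    using local_orthogonal_mapD[OF assms(1) p(1) q(1)] by simp
qed

theorem mainTheorem1:
  fixes r s t r' s' t' :: nat
    and U :: "(complex^'n::{finite,linorder}) set"
    and F :: "complex^'n::{finite,linorder} \<Rightarrow> complex^'m::{finite,linorder}"
  assumes "r + s + t = CARD('n)" and "r' + s' + t' = CARD('m)"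
    and "proj_cone U" and "open U" and "connected U"
    and "\<exists>z\<in>U. herm r s z z = 0"
    and "local_orthogonal_map r s r' s' F U"
  shows "(\<forall>H. null_subspace r s H \<longrightarrow>
            (\<exists>H'. null_subspace r' s' H' \<and> (\<forall>z\<in>U \<inter> H. F z \<in> H')))
       \<and> (\<forall>z\<in>U. herm r s z z = 0 \<longrightarrow> herm r' s' (F z) (F z) = 0)"
proof
  show "\<forall>H. null_subspace r s H \<longrightarrow>
          (\<exists>H'. null_subspace r' s' H' \<and> (\<forall>z\<in>U \<inter> H. F z \<in> H'))"
  proof (intro allI impI)
    fix H :: "(complex^'n::{finite,linorder}) set"
    assume "null_subspace r s H"
    then have "\<forall>x\<in>H. \<forall>y\<in>H. herm r s x y = 0"
      unfolding null_subspace_def by blast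
    then have "\<forall>x\<in>F ` (U \<inter> H). \<forall>y\<in>F ` (U \<inter> H). herm r' s' x y = 0"
      by (rule local_orthogonal_map_isotropic_image[OF assms(7)])
    then have "null_subspace r' s' (cspan (F ` (U \<inter> H)))"
      by (rule null_subspace_cspan)
    moreover have "\<forall>z\<in>U \<inter> H. F z \<in> cspan (F ` (U \<inter> H))"
      using cspan_superset[of "F ` (U \<inter> H)"] by blast
    ultimately show "\<exists>H'. null_subspace r' s' H' \<and> (\<forall>z\<in>U \<inter> H. F z \<in> H')"
      by blast
  qed
  show "\<forall>z\<in>U. herm r s z z = 0 \<longrightarrow> herm r' s' (F z) (F z) = 0"
    using local_orthogonal_mapD[OF assms(7)] by simp
qed

end
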